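(* For every $r=(r_1,r_2,r_3)\in\mathbb R_{>0}^3$ one has $\dim V_{\pi_{\omega_1}}^H=\dim V_{\pi_{\omega_2}}^H=1$, and $\pi_{\omega_1}$ and $\pi_{\omega_2}$ contribute to $\operatorname{Spec}(G/H,g_r)$ the eigenvalues $$\lambda^{\pi_{\omega_1}}(r)=\tfrac13r_1^2+\tfrac16r_2^2\qquad\text{and}\qquad \lambda^{\pi_{\omega_2}}(r)=\tfrac1{12}r_1^2+\tfrac16r_2^2+\tfrac34r_3^2,$$ with multiplicities $7$ and $14$ respectively.
   Context: Setting: $G\subset\mathrm{SO}(7)$ the compact connected group of type $G_2$, maximal torus $T$, $\mathfrak t_\mathbb C^*=\{\sum a_i\varepsilon_i:\sum a_i=0\}$, positive roots $\varepsilon_2-\varepsilon_3,\ \varepsilon_1-2\varepsilon_2+\varepsilon_3,\ \varepsilon_1-\varepsilon_2,\ \varepsilon_1+\varepsilon_2-2\varepsilon_3,\ \varepsilon_1-\varepsilon_3,\ 2\varepsilon_1-\varepsilon_2-\varepsilon_3$ (first two simple), root spaces $\mathfrak g_\alpha$. $H\cong\mathrm U(2)$ the connected subgroup with $\mathfrak h_\mathbb C=\mathfrak t_\mathbb C\oplus\mathfrak g_{\pm(\varepsilon_1+\varepsilon_2-2\varepsilon_3)}$, so $G/H\cong\mathrm{Gr}(2,7)=\mathrm{SO}(7)/(\mathrm{SO}(5)\times\mathrm{SO}(2))$. $K\cong\mathrm{SU}(3)$ the connected subgroup containing $T$ with roots $\pm(\varepsilon_1-2\varepsilon_2+\varepsilon_3),\pm(\varepsilon_1+\varepsilon_2-2\varepsilon_3),\pm(2\varepsilon_1-\varepsilon_2-\varepsilon_3)$.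 $\langle\cdot,\cdot\rangle=-B_\mathfrak g$ (negative Killing form). Real subspaces $\mathfrak p_1,\mathfrak p_2,\mathfrak p_3$ with $(\mathfrak p_1)_\mathbb C=\mathfrak g_{\pm(\varepsilon_1-\varepsilon_3)}\oplus\mathfrak g_{\pm(\varepsilon_2-\varepsilon_3)}$, $(\mathfrak p_2)_\mathbb C=\mathfrak g_{\pm(\varepsilon_1-\varepsilon_2)}$, $(\mathfrak p_3)_\mathbb C=\mathfrak g_{\pm(\varepsilon_1-2\varepsilon_2+\varepsilon_3)}\oplus\mathfrak g_{\pm(2\varepsilon_1-\varepsilon_2-\varepsilon_3)}$; $g_r$ ($r\in\mathbb R^3_{>0}$) is the $G$-invariant metric on $G/H$ induced by $\sum_h r_h^{-2}\langle\cdot,\cdot\rangle|_{\mathfrak p_h}$ on $\mathfrak p=\mathfrak p_1\oplus\mathfrak p_2\oplus\mathfrak p_3$. $\pi_\Lambda$ denotes the irreducible representation of $G$ with highest weight $\Lambda$; $\omega_1=\varepsilon_1-\varepsilon_3$ and $\omega_2=2\varepsilon_1-\varepsilon_2-\varepsilon_3$ are the fundamental weights ($\pi_{\omega_1}$ is the 7-dimensional standard representation, $\pi_{\omega_2}$ the 14-dimensional adjoint representation). Spectrum: for a $G$-invariant metric $g$ on $G/H$ given by an $\mathrm{Ad}(H)$-invariant inner product on $\mathfrak p$ with orthonormal basis $X_1,\dots,X_n$, $\operatorname{Spec}(G/H,g)$ is the union over irreducible representations $(\pi,V_\pi)$ of $G$ of the eigenvalues of the self-adjoint operator $-\sum_i\pi(X_i)^2$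 restricted to $V_\pi^H$ (the $H$-fixed vectors), each counted $\dim V_\pi$ times. "$\pi$ contributes the eigenvalue $\lambda$ with multiplicity $\dim V_\pi$" means $\dim V_\pi^H=1$ and this operator acts on $V_\pi^H$ by $\lambda$. *)

theory Defs
  imports "HOL-Analysis.Analysis"
begin

text \<open>Index set of R^7.  Coordinates: I0 = t (the real line), and
  (I1,I2), (I3,I4), (I5,I6) = (x_j, y_j) real coordinates of z_j = x_j + i y_j in C^3,
  so that R^7 = R + C^3.\<close>

datatype i7 = I0 | I1 | I2 | I3 | I4 | I5 | I6

lemma UNIV_i7: "(UNIV :: i7 set) = {I0, I1, I2, I3, I4, I5, I6}"
  by (auto intro: i7.exhaust)

instance i7 :: finite
proof
  show "finite (UNIV :: i7 set)" by (simp add: UNIV_i7)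
qed

type_synonym vec7 = "real^i7"
type_synonym mat7 = "real^i7^i7"

definition det3 :: "real \<Rightarrow> real \<Rightarrow> real \<Rightarrow> real \<Rightarrow> real \<Rightarrow> real \<Rightarrow> real \<Rightarrow> real \<Rightarrow> real \<Rightarrow> real" where
  "det3 a b c d e f g h k = a * (e * k - f * h) - b * (d * k - f * g) + c * (d * h - e * g)"

definition wedge3 :: "i7 \<Rightarrow> i7 \<Rightarrow> i7 \<Rightarrow> vec7 \<Rightarrow> vec7 \<Rightarrow> vec7 \<Rightarrow> real" where
  "wedge3 i j k u v w = det3 (u$i) (u$j) (u$k) (v$i) (v$j) (v$k) (w$i) (w$j) (w$k)"

text \<open>The G2 3-form  phi = dt /\ omega + Re(dz1 /\ dz2 /\ dz3),
  omega = sum_j dx_j /\ dy_j.\<close>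
definition phi3 :: "vec7 \<Rightarrow> vec7 \<Rightarrow> vec7 \<Rightarrow> real" where
  "phi3 u v w =
     wedge3 I0 I1 I2 u v w + wedge3 I0 I3 I4 u v w + wedge3 I0 I5 I6 u v w
   + wedge3 I1 I3 I5 u v w - wedge3 I1 I4 I6 u v w - wedge3 I2 I3 I6 u v w
   - wedge3 I2 I4 I5 u v w"

text \<open>g2 = Lie algebra of G = stabilizer of phi in SO(7).\<close>
definition g2 :: "mat7 set" where
  "g2 = {A. transpose A = - A \<and>
            (\<forall>u v w. phi3 (A *v u) v w + phi3 u (A *v v) w + phi3 u v (A *v w) = 0)}"

definition lbr :: "mat7 \<Rightarrow> mat7 \<Rightarrow> mat7" where
  "lbr X Y = X ** Y - Y ** X"

text \<open>Trace of a linear endomorphism f of a subspace S of a Euclidean space,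
  computed in an orthonormal basis of S (independent of the choice).\<close>
definition trace_on :: "'a::euclidean_space set \<Rightarrow> ('a \<Rightarrow> 'a) \<Rightarrow> real" where
  "trace_on S f = (SOME t. \<exists>B. B \<subseteq> S \<and> pairwise orthogonal B \<and> (\<forall>x\<in>B. norm x = 1) \<and>
                     independent B \<and> span B = S \<and> t = (\<Sum>b\<in>B. inner b (f b)))"

definition killing :: "mat7 \<Rightarrow> mat7 \<Rightarrow> real" where
  "killing X Y = trace_on g2 (\<lambda>Z. lbr X (lbr Y Z))"

definition kip :: "mat7 \<Rightarrow> mat7 \<Rightarrow> real" where
  "kip X Y = - killing X Y"

definition rotgen :: "real \<Rightarrow> real \<Rightarrow> real \<Rightarrow> mat7" where
  "rotgen th1 th2 th3 = (\<chi> i j.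
      if i = I1 \<and> j = I2 then - th1 else if i = I2 \<and> j = I1 then th1
      else if i = I3 \<and> j = I4 then - th2 else if i = I4 \<and> j = I3 then th2
      else if i = I5 \<and> j = I6 then - th3 else if i = I6 \<and> j = I5 then th3
      else 0)"

text \<open>Element of the Cartan subalgebra t on which eps_k takes the value i * e_k
  (for e1 + e2 + e3 = 0); the weights of C^3 are eps_2-eps_3, eps_3-eps_1, eps_1-eps_2.\<close>
definition tor :: "real \<Rightarrow> real \<Rightarrow> real \<Rightarrow> mat7" where
  "tor e1 e2 e3 = rotgen (e2 - e3) (e3 - e1) (e1 - e2)"

definition tset :: "mat7 set" where
  "tset = {tor e1 e2 e3 | e1 e2 e3. e1 + e2 + e3 = 0}"

text \<open>Real root space (g_alpha + g_{-alpha}) intersected with g2, for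
  alpha = a1 eps_1 + a2 eps_2 + a3 eps_3: since ad(H) acts on g_{+-alpha} by +- alpha(H),
  which is purely imaginary for H in t, this is the set of X in g2 with
  ad(H)^2 X = alpha(H)^2 X for all H in t.\<close>
definition rootsp :: "real \<Rightarrow> real \<Rightarrow> real \<Rightarrow> mat7 set" where
  "rootsp a1 a2 a3 = {X \<in> g2. \<forall>e1 e2 e3. e1 + e2 + e3 = 0 \<longrightarrow>
       lbr (tor e1 e2 e3) (lbr (tor e1 e2 e3) X) = - ((a1 * e1 + a2 * e2 + a3 * e3)^2) *\<^sub>R X}"

text \<open>Lie algebra of H = U(2): t + (g_{+-(eps1+eps2-2eps3)} \<inter> g).\<close>
definition hlie :: "mat7 set" where
  "hlie = {T + X | T X. T \<in> tset \<and> X \<in> rootsp 1 1 (-2)}"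

definition p1 :: "mat7 set" where
  "p1 = {X + Y | X Y. X \<in> rootsp 1 0 (-1) \<and> Y \<in> rootsp 0 1 (-1)}"

definition p2 :: "mat7 set" where
  "p2 = rootsp 1 (-1) 0"

definition p3 :: "mat7 set" where
  "p3 = {X + Y | X Y. X \<in> rootsp 1 (-2) 1 \<and> Y \<in> rootsp 2 (-1) (-1)}"

definition pspace :: "mat7 set" where
  "pspace = {X1 + X2 + X3 | X1 X2 X3. X1 \<in> p1 \<and> X2 \<in> p2 \<and> X3 \<in> p3}"

definition gr :: "real \<Rightarrow> real \<Rightarrow> real \<Rightarrow> mat7 \<Rightarrow> mat7 \<Rightarrow> real" where
  "gr r1 r2 r3 X Y = (THE c. \<exists>X1 X2 X3 Y1 Y2 Y3.
      X1 \<in> p1 \<and> X2 \<in> p2 \<and> X3 \<in> p3 \<and> Y1 \<in> p1 \<and> Y2 \<in> p2 \<and> Y3 \<in> p3 \<and>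
      X = X1 + X2 + X3 \<and> Y = Y1 + Y2 + Y3 \<and>
      c = kip X1 Y1 / r1^2 + kip X2 Y2 / r2^2 + kip X3 Y3 / r3^2)"

definition gr_onb :: "real \<Rightarrow> real \<Rightarrow> real \<Rightarrow> mat7 set \<Rightarrow> bool" where
  "gr_onb r1 r2 r3 B \<longleftrightarrow> finite B \<and> B \<subseteq> pspace \<and> span B = span pspace \<and>
     (\<forall>X\<in>B. \<forall>Y\<in>B. gr r1 r2 r3 X Y = (if X = Y then 1 else 0))"

text \<open>The operator  - sum_i pi(X_i)^2  for a representation pi (given by its
  differential on g2) and an orthonormal basis X_1..X_n of (p, g_r).\<close>
definition lap_op :: "real \<Rightarrow> real \<Rightarrow> real \<Rightarrow> (mat7 \<Rightarrow> 'v \<Rightarrow> 'v) \<Rightarrow> 'v \<Rightarrow> 'v::real_vector" where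
  "lap_op r1 r2 r3 \<pi> v = - (\<Sum>X\<in>(SOME B. gr_onb r1 r2 r3 B). \<pi> X (\<pi> X v))"

text \<open>H-fixed vectors in V (H connected, so these are the vectors killed by Lie(H)).\<close>
definition fixH :: "(mat7 \<Rightarrow> 'v \<Rightarrow> 'v) \<Rightarrow> 'v set \<Rightarrow> 'v::real_vector set" where
  "fixH \<pi> V = {v \<in> V. \<forall>X\<in>hlie. \<pi> X v = 0}"

text \<open>pi_{omega_1}: the standard 7-dimensional representation on R^7.\<close>
definition pi_std :: "mat7 \<Rightarrow> vec7 \<Rightarrow> vec7" where
  "pi_std X v = X *v v"

text \<open>pi_{omega_2}: the adjoint representation on g2.\<close>
definition pi_ad :: "mat7 \<Rightarrow> mat7 \<Rightarrow> mat7" where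
  "pi_ad X Y = lbr X Y"

end

theory Submission
  imports Defs
begin

text \<open>
  The Lie algebra \<open>g2\<close> has an explicit basis \<open>g2b\<close> adapted to the root decomposition
  with respect to the torus \<open>tor\<close>: two real vectors for each pair \<open>\<plusminus>\<alpha>\<close> of roots and
  two spanning the torus. This basis is orthogonal for the Frobenius inner product, and
  a direct computation shows that on \<open>g2\<close> the Killing form is \<open>-4\<close> times that inner
  product. Hence the basis vectors spanning \<open>p\<close>, rescaled blockwise, form a
  \<open>g_r\<close>-orthonormal basis, and \<open>-\<Sum> \<pi>(X\<^sub>i)\<^sup>2\<close> becomes a weighted sum of \<open>\<pi>(g2b k)\<^sup>2\<close>
  over these ten vectors. The Lie algebra of \<open>H\<close> is spanned by the torus and the root
  vectors of \<open>\<plusminus>(\<epsilon>\<^sub>1 + \<epsilon>\<^sub>2 - 2\<epsilon>\<^sub>3)\<close>, so the \<open>H\<close>-fixed vectors are the line through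
  \<open>e\<^sub>0\<close> in \<open>\<real>\<^sup>7\<close> and the line through the central element \<open>g2b Gt2\<close> of \<open>h\<close> in \<open>g2\<close>.
\<close>

lemma orthogonal_expansion:
  fixes g :: "'a::real_vector \<Rightarrow> 'a \<Rightarrow> real"
  assumes lin: "\<And>y. linear (\<lambda>x. g x y)" and "finite C"
    and orth: "\<And>c c'. c \<in> C \<Longrightarrow> c' \<in> C \<Longrightarrow> c \<noteq> c' \<Longrightarrow> g c c' = 0"
    and nz: "\<And>c. c \<in> C \<Longrightarrow> g c c \<noteq> 0"
    and "x \<in> span C"
  shows "x = (\<Sum>c\<in>C. (g x c / g c c) *\<^sub>R c)"
proof -
  obtain u where x: "x = (\<Sum>c\<in>C. u c *\<^sub>R c)"
    using span_finite[OF \<open>finite C\<close>] \<open>x \<in> span C\<close> by auto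
  have u: "u c = g x c / g c c" if "c \<in> C" for c
  proof -
    have "g x c = (\<Sum>c'\<in>C. u c' * g c' c)"
      unfolding x by (simp add: linear_sum[OF lin] linear_scale[OF lin])
    also have "\<dots> = (\<Sum>c'\<in>C. if c' = c then u c * g c c else 0)"
      by (rule sum.cong) (use orth that in auto)
    finally show ?thesis using \<open>finite C\<close> that nz by simp
  qed
  from x show ?thesis by (simp add: u cong: sum.cong)
qed

lemma orthonormal_diagonal_sum:
  fixes g :: "'a::real_vector \<Rightarrow> 'a \<Rightarrow> real" and Q :: "'a \<Rightarrow> 'a \<Rightarrow> 'b::real_vector"
  assumes g: "bilinear g" and g_sym: "\<And>x y. g x y = g y x" and Q: "bilinear Q"
    and "finite B" and B_onb: "\<And>b b'. b \<in> B \<Longrightarrow> b' \<in> B \<Longrightarrow> g b b' = (if b = b' then 1 else 0)"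
    and "finite C" and C_orth: "\<And>c c'. c \<in> C \<Longrightarrow> c' \<in> C \<Longrightarrow> c \<noteq> c' \<Longrightarrow> g c c' = 0"
    and C_nz: "\<And>c. c \<in> C \<Longrightarrow> g c c \<noteq> 0"
    and span_eq: "span B = span C"
  shows "(\<Sum>b\<in>B. Q b b) = (\<Sum>c\<in>C. (1 / g c c) *\<^sub>R Q c c)"
proof -
  have g_lin: "linear (\<lambda>x. g x y)" for y using g by (simp add: bilinear_def)
  have Q_lin1: "linear (\<lambda>x. Q x y)" and Q_lin2: "linear (Q x)" for x y
    using Q by (simp_all add: bilinear_def)
  have in_C: "b \<in> span C" if "b \<in> B" for b using that span_eq by (metis span_base)
  have in_B: "c \<in> span B" if "c \<in> C" for c using that span_eq by (metis span_base)
  have "(\<Sum>b\<in>B. Q b b) = (\<Sum>b\<in>B. Q b (\<Sum>c\<in>C. (g b c / g c c) *\<^sub>R c))"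
    using orthogonal_expansion[OF g_lin \<open>finite C\<close> C_orth C_nz in_C] by (simp cong: sum.cong)
  also have "\<dots> = (\<Sum>c\<in>C. (1 / g c c) *\<^sub>R (\<Sum>b\<in>B. g c b *\<^sub>R Q b c))"
    by (simp add: linear_sum[OF Q_lin2] linear_scale[OF Q_lin2] scaleR_sum_right g_sym
        sum.swap[of _ C B])
  also have "\<dots> = (\<Sum>c\<in>C. (1 / g c c) *\<^sub>R Q (\<Sum>b\<in>B. (g c b / g b b) *\<^sub>R b) c)"
    using B_onb by (simp add: linear_sum[OF Q_lin1] linear_scale[OF Q_lin1] cong: sum.cong)
  also have "\<dots> = (\<Sum>c\<in>C. (1 / g c c) *\<^sub>R Q c c)"
  proof (rule sum.cong[OF refl])
    fix c assume "c \<in> C"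
    have "c = (\<Sum>b\<in>B. (g c b / g b b) *\<^sub>R b)"
      by (rule orthogonal_expansion[OF g_lin \<open>finite B\<close> _ _ in_B[OF \<open>c \<in> C\<close>]]) (simp_all add: B_onb)
    then show "(1 / g c c) *\<^sub>R Q (\<Sum>b\<in>B. (g c b / g b b) *\<^sub>R b) c = (1 / g c c) *\<^sub>R Q c c"
      by simp
  qed
  finally show ?thesis .
qed

lemma orthonormal_rescaling:
  fixes g :: "'a::real_vector \<Rightarrow> 'a \<Rightarrow> real"
  assumes g: "bilinear g" and "finite C"
    and C_orth: "\<And>c c'. c \<in> C \<Longrightarrow> c' \<in> C \<Longrightarrow> c \<noteq> c' \<Longrightarrow> g c c' = 0"
    and C_pos: "\<And>c. c \<in> C \<Longrightarrow> g c c > 0"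
  obtains B where "finite B" "span B = span C"
    "\<And>b b'. b \<in> B \<Longrightarrow> b' \<in> B \<Longrightarrow> g b b' = (if b = b' then 1 else 0)"
proof
  define n where "n c = (1 / sqrt (g c c)) *\<^sub>R c" for c
  have g_n: "g (n c) (n c') = (if c = c' then 1 else 0)" if "c \<in> C" "c' \<in> C" for c c'
    using C_orth[OF that] C_pos[OF that(1)] C_pos[OF that(2)]
    by (auto simp: n_def bilinear_lmul[OF g] bilinear_rmul[OF g])
  have "inj_on n C"
  proof (rule inj_onI)
    fix c c' assume "c \<in> C" "c' \<in> C" "n c = n c'"
    then show "c = c'" using g_n[of c c] g_n[of c c'] by (auto split: if_splits)
  qed
  then show "\<And>b b'. b \<in> n ` C \<Longrightarrow> b' \<in> n ` C \<Longrightarrow> g b b' = (if b = b' then 1 else 0)"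
    by (auto simp: g_n inj_on_eq_iff)
  show "finite (n ` C)" using \<open>finite C\<close> by simp
  show "span (n ` C) = span C"
    unfolding n_def using \<open>finite C\<close> C_pos by (intro span_image_scale) (auto dest: C_pos)
qed

lemma trace_on_orthogonal_basis:
  fixes C :: "'a::euclidean_space set"
  assumes "finite C" and C_orth: "pairwise orthogonal C" and "0 \<notin> C" and "span C = S"
    and "linear f"
  shows "trace_on S f = (\<Sum>c\<in>C. inner c (f c) / inner c c)"
proof -
  let ?onb = "\<lambda>B. B \<subseteq> S \<and> pairwise orthogonal B \<and> (\<forall>x\<in>B. norm x = 1) \<and> independent B \<and> span B = S"
  have "subspace S" using \<open>span C = S\<close> subspace_span by blast
  then obtain B0 where "?onb B0" by (rule orthonormal_basis_subspace) auto
  have "\<exists>B. B \<subseteq> S \<and> pairwise orthogonal B \<and> (\<forall>x\<in>B. norm x = 1) \<and> independent B \<and>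
      span B = S \<and> trace_on S f = (\<Sum>b\<in>B. inner b (f b))"
    unfolding trace_on_def by (rule someI_ex) (use \<open>?onb B0\<close> in blast)
  then obtain B where B: "?onb B" and tr: "trace_on S f = (\<Sum>b\<in>B. inner b (f b))"
    by blast
  have "bilinear (\<lambda>x y. inner x (f y))"
    using \<open>linear f\<close> by (auto simp: bilinear_def linear_iff inner_add intro!: linearI)
  moreover have "bilinear inner"
    by (auto simp: bilinear_def inner_add intro!: linearI)
  moreover have "inner b b' = (if b = b' then 1 else 0)" if "b \<in> B" "b' \<in> B" for b b'
    using B that by (auto simp: pairwise_def orthogonal_def norm_eq_1)
  moreover have "inner c c' = 0" if "c \<in> C" "c' \<in> C" "c \<noteq> c'" for c c'
    using C_orth that by (auto simp: pairwise_def orthogonal_def)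
  moreover have "inner c c \<noteq> 0" if "c \<in> C" for c using \<open>0 \<notin> C\<close> that by auto
  moreover have "finite B" using B finiteI_independent by blast
  ultimately have "(\<Sum>b\<in>B. inner b (f b)) = (\<Sum>c\<in>C. (1 / inner c c) *\<^sub>R inner c (f c))"
    using orthonormal_diagonal_sum[of inner "\<lambda>x y. inner x (f y)" B C] B \<open>finite C\<close> \<open>span C = S\<close>
    by (simp add: inner_commute)
  with tr show ?thesis by simp
qed

lemma span_image_Un: "span (f ` (A \<union> B)) = {x + y | x y. x \<in> span (f ` A) \<and> y \<in> span (f ` B)}"
  by (simp only: image_Un span_Un)

lemma matrix_add_rdistrib: "((B::'a::semiring_1^'n^'m) + C) ** A = B ** A + C ** A"
  by (simp add: matrix_matrix_mult_def vec_eq_iff sum.distrib algebra_simps)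

section \<open>Skew-symmetric 7 \<times> 7 matrices\<close>

lemma sum_i7: "sum f (UNIV :: i7 set) = f I0 + f I1 + f I2 + f I3 + f I4 + f I5 + f I6"
  by (simp add: UNIV_i7 add.assoc)

lemma all_i7: "(\<forall>i::i7. P i) \<longleftrightarrow> P I0 \<and> P I1 \<and> P I2 \<and> P I3 \<and> P I4 \<and> P I5 \<and> P I6"
  by (metis i7.exhaust)

lemma mat7_eq_iff: "(A::mat7) = B \<longleftrightarrow> (\<forall>i j. A$i$j = B$i$j)"
  by (simp add: vec_eq_iff)

definition skew7 ::
  "real \<Rightarrow> real \<Rightarrow> real \<Rightarrow> real \<Rightarrow> real \<Rightarrow> real \<Rightarrow> real \<Rightarrow> real \<Rightarrow> real \<Rightarrow> real \<Rightarrow> real \<Rightarrow>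
   real \<Rightarrow> real \<Rightarrow> real \<Rightarrow> real \<Rightarrow> real \<Rightarrow> real \<Rightarrow> real \<Rightarrow> real \<Rightarrow> real \<Rightarrow> real \<Rightarrow> mat7" where
  "skew7 x01 x02 x03 x04 x05 x06 x12 x13 x14 x15 x16 x23 x24 x25 x26 x34 x35 x36 x45 x46 x56 =
    (\<chi> i j. case i of
      I0 \<Rightarrow> (case j of I0 \<Rightarrow> 0 | I1 \<Rightarrow> x01 | I2 \<Rightarrow> x02 | I3 \<Rightarrow> x03 | I4 \<Rightarrow> x04 | I5 \<Rightarrow> x05 | I6 \<Rightarrow> x06)
    | I1 \<Rightarrow> (case j of I0 \<Rightarrow> - x01 | I1 \<Rightarrow> 0 | I2 \<Rightarrow> x12 | I3 \<Rightarrow> x13 | I4 \<Rightarrow> x14 | I5 \<Rightarrow> x15 | I6 \<Rightarrow> x16)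
    | I2 \<Rightarrow> (case j of I0 \<Rightarrow> - x02 | I1 \<Rightarrow> - x12 | I2 \<Rightarrow> 0 | I3 \<Rightarrow> x23 | I4 \<Rightarrow> x24 | I5 \<Rightarrow> x25 | I6 \<Rightarrow> x26)
    | I3 \<Rightarrow> (case j of I0 \<Rightarrow> - x03 | I1 \<Rightarrow> - x13 | I2 \<Rightarrow> - x23 | I3 \<Rightarrow> 0 | I4 \<Rightarrow> x34 | I5 \<Rightarrow> x35 | I6 \<Rightarrow> x36)
    | I4 \<Rightarrow> (case j of I0 \<Rightarrow> - x04 | I1 \<Rightarrow> - x14 | I2 \<Rightarrow> - x24 | I3 \<Rightarrow> - x34 | I4 \<Rightarrow> 0 | I5 \<Rightarrow> x45 | I6 \<Rightarrow> x46)
    | I5 \<Rightarrow> (case j of I0 \<Rightarrow> - x05 | I1 \<Rightarrow> - x15 | I2 \<Rightarrow> - x25 | I3 \<Rightarrow> - x35 | I4 \<Rightarrow> - x45 | I5 \<Rightarrow> 0 | I6 \<Rightarrow> x56)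
    | I6 \<Rightarrow> (case j of I0 \<Rightarrow> - x06 | I1 \<Rightarrow> - x16 | I2 \<Rightarrow> - x26 | I3 \<Rightarrow> - x36 | I4 \<Rightarrow> - x46 | I5 \<Rightarrow> - x56 | I6 \<Rightarrow> 0))"

lemmas skew7_nth [simp] = arg_cong[where f = "\<lambda>M. M $ i $ j", OF skew7_def, simplified] for i j

lemma skew7_eq_iff:
  "skew7 x01 x02 x03 x04 x05 x06 x12 x13 x14 x15 x16 x23 x24 x25 x26 x34 x35 x36 x45 x46 x56 =
     skew7 y01 y02 y03 y04 y05 y06 y12 y13 y14 y15 y16 y23 y24 y25 y26 y34 y35 y36 y45 y46 y56 \<longleftrightarrow>
     x01 = y01 \<and> x02 = y02 \<and> x03 = y03 \<and> x04 = y04 \<and> x05 = y05 \<and> x06 = y06 \<and> x12 = y12 \<and>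
     x13 = y13 \<and> x14 = y14 \<and> x15 = y15 \<and> x16 = y16 \<and> x23 = y23 \<and> x24 = y24 \<and> x25 = y25 \<and>
     x26 = y26 \<and> x34 = y34 \<and> x35 = y35 \<and> x36 = y36 \<and> x45 = y45 \<and> x46 = y46 \<and> x56 = y56"
  unfolding mat7_eq_iff all_i7 by (auto simp: skew7_def)

lemma skew7_add:
  "skew7 x01 x02 x03 x04 x05 x06 x12 x13 x14 x15 x16 x23 x24 x25 x26 x34 x35 x36 x45 x46 x56 +
   skew7 y01 y02 y03 y04 y05 y06 y12 y13 y14 y15 y16 y23 y24 y25 y26 y34 y35 y36 y45 y46 y56 =
   skew7 (x01 + y01) (x02 + y02) (x03 + y03) (x04 + y04) (x05 + y05) (x06 + y06) (x12 + y12)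
     (x13 + y13) (x14 + y14) (x15 + y15) (x16 + y16) (x23 + y23) (x24 + y24) (x25 + y25)
     (x26 + y26) (x34 + y34) (x35 + y35) (x36 + y36) (x45 + y45) (x46 + y46) (x56 + y56)"
  unfolding mat7_eq_iff all_i7 by (simp add: skew7_def)

lemma skew7_scaleR:
  "a *\<^sub>R skew7 x01 x02 x03 x04 x05 x06 x12 x13 x14 x15 x16 x23 x24 x25 x26 x34 x35 x36 x45 x46 x56 =
   skew7 (a * x01) (a * x02) (a * x03) (a * x04) (a * x05) (a * x06) (a * x12)
     (a * x13) (a * x14) (a * x15) (a * x16) (a * x23) (a * x24) (a * x25)
     (a * x26) (a * x34) (a * x35) (a * x36) (a * x45) (a * x46) (a * x56)"
  unfolding mat7_eq_iff all_i7 by (simp add: skew7_def)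

lemma skew7_uminus:
  "- skew7 x01 x02 x03 x04 x05 x06 x12 x13 x14 x15 x16 x23 x24 x25 x26 x34 x35 x36 x45 x46 x56 =
   skew7 (- x01) (- x02) (- x03) (- x04) (- x05) (- x06) (- x12) (- x13) (- x14) (- x15) (- x16)
     (- x23) (- x24) (- x25) (- x26) (- x34) (- x35) (- x36) (- x45) (- x46) (- x56)"
  unfolding mat7_eq_iff all_i7 by simp

lemma skew7_zero: "0 = skew7 0 0 0 0 0 0 0 0 0 0 0 0 0 0 0 0 0 0 0 0 0"
  unfolding mat7_eq_iff all_i7 by (simp add: skew7_def)

lemma transpose_skew7:
  "transpose (skew7 x01 x02 x03 x04 x05 x06 x12 x13 x14 x15 x16 x23 x24 x25 x26 x34 x35 x36 x45 x46 x56) =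
   - skew7 x01 x02 x03 x04 x05 x06 x12 x13 x14 x15 x16 x23 x24 x25 x26 x34 x35 x36 x45 x46 x56"
  unfolding mat7_eq_iff all_i7 by (simp add: skew7_def transpose_def)

lemma inner_skew7:
  "inner (skew7 x01 x02 x03 x04 x05 x06 x12 x13 x14 x15 x16 x23 x24 x25 x26 x34 x35 x36 x45 x46 x56)
     (skew7 y01 y02 y03 y04 y05 y06 y12 y13 y14 y15 y16 y23 y24 y25 y26 y34 y35 y36 y45 y46 y56) =
   2 * (x01 * y01 + x02 * y02 + x03 * y03 + x04 * y04 + x05 * y05 + x06 * y06 + x12 * y12 +
        x13 * y13 + x14 * y14 + x15 * y15 + x16 * y16 + x23 * y23 + x24 * y24 + x25 * y25 +
        x26 * y26 + x34 * y34 + x35 * y35 + x36 * y36 + x45 * y45 + x46 * y46 + x56 * y56)"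
  by (simp add: skew7_def inner_vec_def sum_i7 algebra_simps)

lemma skew7_mult_vec [simp]:
  "(skew7 x01 x02 x03 x04 x05 x06 x12 x13 x14 x15 x16 x23 x24 x25 x26 x34 x35 x36 x45 x46 x56 *v v) $ I0 =
    x01 * v$I1 + x02 * v$I2 + x03 * v$I3 + x04 * v$I4 + x05 * v$I5 + x06 * v$I6"
  "(skew7 x01 x02 x03 x04 x05 x06 x12 x13 x14 x15 x16 x23 x24 x25 x26 x34 x35 x36 x45 x46 x56 *v v) $ I1 =
    - x01 * v$I0 + x12 * v$I2 + x13 * v$I3 + x14 * v$I4 + x15 * v$I5 + x16 * v$I6"
  "(skew7 x01 x02 x03 x04 x05 x06 x12 x13 x14 x15 x16 x23 x24 x25 x26 x34 x35 x36 x45 x46 x56 *v v) $ I2 =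
    - x02 * v$I0 - x12 * v$I1 + x23 * v$I3 + x24 * v$I4 + x25 * v$I5 + x26 * v$I6"
  "(skew7 x01 x02 x03 x04 x05 x06 x12 x13 x14 x15 x16 x23 x24 x25 x26 x34 x35 x36 x45 x46 x56 *v v) $ I3 =
    - x03 * v$I0 - x13 * v$I1 - x23 * v$I2 + x34 * v$I4 + x35 * v$I5 + x36 * v$I6"
  "(skew7 x01 x02 x03 x04 x05 x06 x12 x13 x14 x15 x16 x23 x24 x25 x26 x34 x35 x36 x45 x46 x56 *v v) $ I4 =
    - x04 * v$I0 - x14 * v$I1 - x24 * v$I2 - x34 * v$I3 + x45 * v$I5 + x46 * v$I6"
  "(skew7 x01 x02 x03 x04 x05 x06 x12 x13 x14 x15 x16 x23 x24 x25 x26 x34 x35 x36 x45 x46 x56 *v v) $ I5 =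
    - x05 * v$I0 - x15 * v$I1 - x25 * v$I2 - x35 * v$I3 - x45 * v$I4 + x56 * v$I6"
  "(skew7 x01 x02 x03 x04 x05 x06 x12 x13 x14 x15 x16 x23 x24 x25 x26 x34 x35 x36 x45 x46 x56 *v v) $ I6 =
    - x06 * v$I0 - x16 * v$I1 - x26 * v$I2 - x36 * v$I3 - x46 * v$I4 - x56 * v$I5"
  by (simp_all add: matrix_vector_mult_def sum_i7)

lemma lbr_skew7:
  "lbr (skew7 x01 x02 x03 x04 x05 x06 x12 x13 x14 x15 x16 x23 x24 x25 x26 x34 x35 x36 x45 x46 x56)
     (skew7 y01 y02 y03 y04 y05 y06 y12 y13 y14 y15 y16 y23 y24 y25 y26 y34 y35 y36 y45 y46 y56) =
   skew7
     (-x02*y12 - x03*y13 - x04*y14 - x05*y15 - x06*y16 + x12*y02 + x13*y03 + x14*y04 + x15*y05 + x16*y06)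
     (x01*y12 - x03*y23 - x04*y24 - x05*y25 - x06*y26 - x12*y01 + x23*y03 + x24*y04 + x25*y05 + x26*y06)
     (x01*y13 + x02*y23 - x04*y34 - x05*y35 - x06*y36 - x13*y01 - x23*y02 + x34*y04 + x35*y05 + x36*y06)
     (x01*y14 + x02*y24 + x03*y34 - x05*y45 - x06*y46 - x14*y01 - x24*y02 - x34*y03 + x45*y05 + x46*y06)
     (x01*y15 + x02*y25 + x03*y35 + x04*y45 - x06*y56 - x15*y01 - x25*y02 - x35*y03 - x45*y04 + x56*y06)
     (x01*y16 + x02*y26 + x03*y36 + x04*y46 + x05*y56 - x16*y01 - x26*y02 - x36*y03 - x46*y04 - x56*y05)
     (-x01*y02 + x02*y01 - x13*y23 - x14*y24 - x15*y25 - x16*y26 + x23*y13 + x24*y14 + x25*y15 + x26*y16)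
     (-x01*y03 + x03*y01 + x12*y23 - x14*y34 - x15*y35 - x16*y36 - x23*y12 + x34*y14 + x35*y15 + x36*y16)
     (-x01*y04 + x04*y01 + x12*y24 + x13*y34 - x15*y45 - x16*y46 - x24*y12 - x34*y13 + x45*y15 + x46*y16)
     (-x01*y05 + x05*y01 + x12*y25 + x13*y35 + x14*y45 - x16*y56 - x25*y12 - x35*y13 - x45*y14 + x56*y16)
     (-x01*y06 + x06*y01 + x12*y26 + x13*y36 + x14*y46 + x15*y56 - x26*y12 - x36*y13 - x46*y14 - x56*y15)
     (-x02*y03 + x03*y02 - x12*y13 + x13*y12 - x24*y34 - x25*y35 - x26*y36 + x34*y24 + x35*y25 + x36*y26)
     (-x02*y04 + x04*y02 - x12*y14 + x14*y12 + x23*y34 - x25*y45 - x26*y46 - x34*y23 + x45*y25 + x46*y26)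
     (-x02*y05 + x05*y02 - x12*y15 + x15*y12 + x23*y35 + x24*y45 - x26*y56 - x35*y23 - x45*y24 + x56*y26)
     (-x02*y06 + x06*y02 - x12*y16 + x16*y12 + x23*y36 + x24*y46 + x25*y56 - x36*y23 - x46*y24 - x56*y25)
     (-x03*y04 + x04*y03 - x13*y14 + x14*y13 - x23*y24 + x24*y23 - x35*y45 - x36*y46 + x45*y35 + x46*y36)
     (-x03*y05 + x05*y03 - x13*y15 + x15*y13 - x23*y25 + x25*y23 + x34*y45 - x36*y56 - x45*y34 + x56*y36)
     (-x03*y06 + x06*y03 - x13*y16 + x16*y13 - x23*y26 + x26*y23 + x34*y46 + x35*y56 - x46*y34 - x56*y35)
     (-x04*y05 + x05*y04 - x14*y15 + x15*y14 - x24*y25 + x25*y24 - x34*y35 + x35*y34 - x46*y56 + x56*y46)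
     (-x04*y06 + x06*y04 - x14*y16 + x16*y14 - x24*y26 + x26*y24 - x34*y36 + x36*y34 + x45*y56 - x56*y45)
     (-x05*y06 + x06*y05 - x15*y16 + x16*y15 - x25*y26 + x26*y25 - x35*y36 + x36*y35 - x45*y46 + x46*y45)"
  unfolding lbr_def mat7_eq_iff all_i7
  by (simp add: matrix_matrix_mult_def sum_i7 algebra_simps)

lemma skew7_entries:
  assumes "transpose A = - (A::mat7)"
  shows "A = skew7 (A$I0$I1) (A$I0$I2) (A$I0$I3) (A$I0$I4) (A$I0$I5) (A$I0$I6) (A$I1$I2)
    (A$I1$I3) (A$I1$I4) (A$I1$I5) (A$I1$I6) (A$I2$I3) (A$I2$I4) (A$I2$I5)
    (A$I2$I6) (A$I3$I4) (A$I3$I5) (A$I3$I6) (A$I4$I5) (A$I4$I6) (A$I5$I6)"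
proof -
  have anti: "A$j$i = - A$i$j" for i j
    using arg_cong[OF assms, of "\<lambda>M. M $ i $ j"] by (simp add: transpose_def)
  then have diag: "A$i$i = 0" for i
    by (metis neg_equal_zero)
  show ?thesis
    unfolding mat7_eq_iff all_i7 by (simp add: diag) (intro conjI anti)
qed

lemma linear_lbr: "linear (lbr X)" "linear (\<lambda>X. lbr X Y)"
  by (rule linearI; simp add: lbr_def matrix_add_ldistrib matrix_add_rdistrib matrix_scalar_ac
      scalar_matrix_assoc algebra_simps)+

lemma phi3_linear:
  "linear (\<lambda>u. phi3 u v w)" "linear (\<lambda>v. phi3 u v w)" "linear (\<lambda>w. phi3 u v w)"
  by (rule linearI; simp add: phi3_def wedge3_def det3_def algebra_simps)+

lemma subspace_g2: "subspace g2"
proof -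
  have "linear (\<lambda>A::mat7. transpose A + A)"
    by (rule linearI) (simp_all add: transpose_def vec_eq_iff algebra_simps)
  then have "subspace {A::mat7. transpose A + A = 0}"
    by (rule linear_subspace_kernel)
  moreover have "linear (\<lambda>A. phi3 (A *v u) v w + phi3 u (A *v v) w + phi3 u v (A *v w))"
    for u v w
  proof -
    have mult_lin: "linear (\<lambda>A::mat7. A *v x)" for x
      by (rule linearI) (simp_all add: matrix_vector_mult_add_rdistrib scaleR_matrix_vector_assoc)
    show ?thesis
      using linear_compose[OF mult_lin phi3_linear(1)] linear_compose[OF mult_lin phi3_linear(2)]
        linear_compose[OF mult_lin phi3_linear(3)]
      by (intro linear_compose_add) (simp_all add: o_def)
  qed
  then have "subspace {A. phi3 (A *v u) v w + phi3 u (A *v v) w + phi3 u v (A *v w) = 0}"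
    for u v w
    by (rule linear_subspace_kernel)
  ultimately have "subspace ({A::mat7. transpose A + A = 0} \<inter>
      (\<Inter>(u, v, w) \<in> UNIV. {A. phi3 (A *v u) v w + phi3 u (A *v v) w + phi3 u v (A *v w) = 0}))"
    by (auto intro!: subspace_inter subspace_Inter)
  also have "\<dots> = g2"
    by (auto simp: g2_def eq_neg_iff_add_eq_0)
  finally show ?thesis .
qed

lemma g2_equations:
  assumes "skew7 x01 x02 x03 x04 x05 x06 x12 x13 x14 x15 x16 x23 x24 x25 x26 x34 x35 x36 x45 x46 x56 \<in> g2"
  shows "x14 + x23 = x05" "x06 + x24 = x13" "x03 + x16 + x25 = 0" "x26 = x04 + x15"
    "x36 + x45 = x01" "x02 + x46 = x35" "x12 + x34 + x56 = 0"
proof -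
  let ?A = "skew7 x01 x02 x03 x04 x05 x06 x12 x13 x14 x15 x16 x23 x24 x25 x26 x34 x35 x36 x45 x46 x56"
  have "phi3 (?A *v u) v w + phi3 u (?A *v v) w + phi3 u v (?A *v w) = 0" for u v w
    using assms by (simp add: g2_def)
  note phi = this[of "axis _ 1" "axis _ 1" "axis _ 1", simplified phi3_def wedge3_def det3_def axis_def]
  show "x14 + x23 = x05" using phi[of I0 I1 I3] by simp
  show "x06 + x24 = x13" using phi[of I0 I1 I4] by simp
  show "x03 + x16 + x25 = 0" using phi[of I0 I1 I5] by simp
  show "x26 = x04 + x15" using phi[of I0 I1 I6] by simp
  show "x36 + x45 = x01" using phi[of I0 I3 I5] by simp
  show "x02 + x46 = x35" using phi[of I0 I3 I6] by simp
  show "x12 + x34 + x56 = 0" using phi[of I1 I3 I6] by simp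
qed

section \<open>A root basis of g2\<close>

(* Letters a, b, c: root vectors spanning p1, p2, p3; h: root vectors in h; t: the torus. *)
datatype g2_index = Ga1 | Ga2 | Ga3 | Ga4 | Gb1 | Gb2 | Gc1 | Gc2 | Gc3 | Gc4 | Gh1 | Gh2 | Gt1 | Gt2

lemma UNIV_g2_index:
  "(UNIV :: g2_index set) = {Ga1, Ga2, Ga3, Ga4, Gb1, Gb2, Gc1, Gc2, Gc3, Gc4, Gh1, Gh2, Gt1, Gt2}"
  using g2_index.exhaust by auto

instance g2_index :: finite
  by standard (simp add: UNIV_g2_index)

lemma sum_g2_index:
  "sum f (UNIV :: g2_index set) = f Ga1 + f Ga2 + f Ga3 + f Ga4 + f Gb1 + f Gb2 + f Gc1 + f Gc2 +
     f Gc3 + f Gc4 + f Gh1 + f Gh2 + f Gt1 + f Gt2"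
  by (simp add: UNIV_g2_index add.assoc)

lemma all_g2_index:
  "(\<forall>k. P k) \<longleftrightarrow> P Ga1 \<and> P Ga2 \<and> P Ga3 \<and> P Ga4 \<and> P Gb1 \<and> P Gb2 \<and> P Gc1 \<and> P Gc2 \<and>
     P Gc3 \<and> P Gc4 \<and> P Gh1 \<and> P Gh2 \<and> P Gt1 \<and> P Gt2"
  by (subst ball_UNIV[symmetric], subst UNIV_g2_index, simp)

fun g2b :: "g2_index \<Rightarrow> mat7" where
  "g2b Ga1 = skew7 0 0 (- 2) 0 0 0 0 0 0 0 1 0 0 1 0 0 0 0 0 0 0"
  | "g2b Ga2 = skew7 0 0 0 2 0 0 0 0 0 (- 1) 0 0 0 0 1 0 0 0 0 0 0"
  | "g2b Ga3 = skew7 2 0 0 0 0 0 0 0 0 0 0 0 0 0 0 0 0 1 1 0 0"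
  | "g2b Ga4 = skew7 0 (- 2) 0 0 0 0 0 0 0 0 0 0 0 0 0 0 (- 1) 0 0 1 0"
  | "g2b Gb1 = skew7 0 0 0 0 2 0 0 0 1 0 0 1 0 0 0 0 0 0 0 0 0"
  | "g2b Gb2 = skew7 0 0 0 0 0 (- 2) 0 (- 1) 0 0 0 0 1 0 0 0 0 0 0 0 0"
  | "g2b Gc1 = skew7 0 0 0 0 0 0 0 0 0 0 (- 1) 0 0 1 0 0 0 0 0 0 0"
  | "g2b Gc2 = skew7 0 0 0 0 0 0 0 0 0 1 0 0 0 0 1 0 0 0 0 0 0"
  | "g2b Gc3 = skew7 0 0 0 0 0 0 0 0 0 0 0 0 0 0 0 0 0 (- 1) 1 0 0"
  | "g2b Gc4 = skew7 0 0 0 0 0 0 0 0 0 0 0 0 0 0 0 0 1 0 0 1 0"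
  | "g2b Gh1 = skew7 0 0 0 0 0 0 0 0 (- 1) 0 0 1 0 0 0 0 0 0 0 0 0"
  | "g2b Gh2 = skew7 0 0 0 0 0 0 0 1 0 0 0 0 1 0 0 0 0 0 0 0 0"
  | "g2b Gt1 = skew7 0 0 0 0 0 0 (- 1) 0 0 0 0 0 0 0 0 1 0 0 0 0 0"
  | "g2b Gt2 = skew7 0 0 0 0 0 0 (- 1) 0 0 0 0 0 0 0 0 (- 1) 0 0 0 0 2"

declare g2b.simps [simp del]

definition g2vec :: "(g2_index \<Rightarrow> real) \<Rightarrow> mat7" where
  "g2vec c = (\<Sum>k\<in>UNIV. c k *\<^sub>R g2b k)"

lemma g2vec_skew7:
  "g2vec c =
   skew7 (2 * c Ga3) (- 2 * c Ga4) (- 2 * c Ga1) (2 * c Ga2) (2 * c Gb1) (- 2 * c Gb2)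
     (- c Gt1 - c Gt2) (c Gh2 - c Gb2) (c Gb1 - c Gh1) (c Gc2 - c Ga2) (c Ga1 - c Gc1)
     (c Gb1 + c Gh1) (c Gb2 + c Gh2) (c Ga1 + c Gc1) (c Ga2 + c Gc2)
     (c Gt1 - c Gt2) (c Gc4 - c Ga4) (c Ga3 - c Gc3) (c Ga3 + c Gc3) (c Ga4 + c Gc4) (2 * c Gt2)"
  by (simp add: g2vec_def g2b.simps sum_g2_index skew7_scaleR skew7_add skew7_eq_iff)

definition g2coord :: "g2_index \<Rightarrow> mat7 \<Rightarrow> real" where
  "g2coord k X = inner X (g2b k) / inner (g2b k) (g2b k)"

lemma g2b_orthogonal: "k \<noteq> l \<Longrightarrow> inner (g2b k) (g2b l) = 0"
  by (cases k; cases l) (simp_all add: g2b.simps inner_skew7)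

lemma g2b_sqnorm_pos: "inner (g2b k) (g2b k) > 0"
  by (cases k) (simp_all add: g2b.simps inner_skew7)

lemma g2coord_g2b: "g2coord k (g2b l) = (if k = l then 1 else 0)"
  using g2b_sqnorm_pos[of k] by (auto simp: g2coord_def g2b_orthogonal inner_commute)

lemma linear_g2coord: "linear (g2coord k)"
  by (rule linearI) (simp_all add: g2coord_def inner_add_left add_divide_distrib)

lemma g2coord_g2vec: "g2coord k (g2vec c) = c k"
  by (simp add: g2vec_def linear_sum[OF linear_g2coord] linear_scale[OF linear_g2coord]
      g2coord_g2b if_distrib[of "times _"] cong: if_cong)

lemma inner_g2b_g2vec: "inner (g2b k) (g2vec c) = c k * inner (g2b k) (g2b k)"
  using g2coord_g2vec[of k c] g2b_sqnorm_pos[of k]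
  by (simp add: g2coord_def inner_commute[of "g2vec c"] field_simps)

lemma inner_g2vec: "inner (g2vec c) (g2vec d) = (\<Sum>k\<in>UNIV. inner (g2b k) (g2b k) * c k * d k)"
  unfolding g2vec_def[of c] by (simp add: inner_sum_left inner_g2b_g2vec mult_ac)

lemma inj_g2b: "inj g2b"
  by (rule injI) (metis g2coord_g2b zero_neq_one)

lemma g2b_pairwise_orthogonal: "pairwise orthogonal (range g2b)"
  unfolding pairwise_def orthogonal_def by (metis rangeE g2b_orthogonal)

lemma g2b_nonzero: "0 \<notin> range g2b"
  using g2b_sqnorm_pos by (metis image_iff inner_zero_left less_irrefl)

lemma span_g2b_iff: "X \<in> span (g2b ` S) \<longleftrightarrow> (\<exists>c. X = g2vec c \<and> (\<forall>k. k \<notin> S \<longrightarrow> c k = 0))"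
proof
  assume "X \<in> span (g2b ` S)"
  then obtain c where "X = (\<Sum>k\<in>S. c k *\<^sub>R g2b k)"
    using span_finite[of "g2b ` S"] by (auto simp: sum.reindex[OF inj_on_subset[OF inj_g2b]])
  then have "X = g2vec (\<lambda>k. if k \<in> S then c k else 0)"
    by (simp add: g2vec_def if_distrib[of "\<lambda>a. a *\<^sub>R _"] sum.If_cases)
  then show "\<exists>c. X = g2vec c \<and> (\<forall>k. k \<notin> S \<longrightarrow> c k = 0)" by force
next
  assume "\<exists>c. X = g2vec c \<and> (\<forall>k. k \<notin> S \<longrightarrow> c k = 0)"
  then obtain c where X: "X = g2vec c" and c: "\<And>k. k \<notin> S \<Longrightarrow> c k = 0" by blast
  have "X = (\<Sum>k\<in>UNIV. if k \<in> S then c k *\<^sub>R g2b k else 0)"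
    unfolding X g2vec_def by (intro sum.cong) (auto simp: c)
  also have "\<dots> \<in> span (g2b ` S)"
    by (intro span_sum) (auto intro: span_scale span_base span_zero)
  finally show "X \<in> span (g2b ` S)" .
qed

lemma g2b_in_g2: "g2b k \<in> g2"
  by (cases k) (simp_all add: g2b.simps g2_def transpose_skew7
      phi3_def wedge3_def det3_def algebra_simps)

lemma skew7_g2_expansion:
  assumes "skew7 x01 x02 x03 x04 x05 x06 x12 x13 x14 x15 x16 x23 x24 x25 x26 x34 x35 x36 x45 x46 x56 \<in> g2"
  shows "skew7 x01 x02 x03 x04 x05 x06 x12 x13 x14 x15 x16 x23 x24 x25 x26 x34 x35 x36 x45 x46 x56 =
    g2vec (\<lambda>k. g2coord k
      (skew7 x01 x02 x03 x04 x05 x06 x12 x13 x14 x15 x16 x23 x24 x25 x26 x34 x35 x36 x45 x46 x56))"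
  using g2_equations[OF assms]
  by (simp add: g2b.simps g2vec_skew7 g2coord_def inner_skew7 skew7_eq_iff) (simp add: field_simps)

lemma g2_expansion:
  assumes "X \<in> g2"
  shows "X = g2vec (\<lambda>k. g2coord k X)"
proof -
  let ?S = "skew7 (X$I0$I1) (X$I0$I2) (X$I0$I3) (X$I0$I4) (X$I0$I5) (X$I0$I6) (X$I1$I2)
    (X$I1$I3) (X$I1$I4) (X$I1$I5) (X$I1$I6) (X$I2$I3) (X$I2$I4) (X$I2$I5)
    (X$I2$I6) (X$I3$I4) (X$I3$I5) (X$I3$I6) (X$I4$I5) (X$I4$I6) (X$I5$I6)"
  have X: "X = ?S"
    using assms by (intro skew7_entries) (simp add: g2_def)
  also have "\<dots> = g2vec (\<lambda>k. g2coord k ?S)"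
    using assms by (intro skew7_g2_expansion) (subst (asm) X)
  also have "\<dots> = g2vec (\<lambda>k. g2coord k X)"
    by (simp only: X[symmetric])
  finally show ?thesis .
qed

lemma g2_eq_span: "g2 = span (range g2b)"
proof
  show "span (range g2b) \<subseteq> g2"
    by (rule span_minimal) (auto simp: g2b_in_g2 subspace_g2)
  show "g2 \<subseteq> span (range g2b)"
  proof
    fix X assume "X \<in> g2"
    then have "X = (\<Sum>k\<in>UNIV. g2coord k X *\<^sub>R g2b k)"
      unfolding g2vec_def[symmetric] by (rule g2_expansion)
    also have "\<dots> \<in> span (range g2b)"
      by (intro span_sum span_scale span_base) auto
    finally show "X \<in> span (range g2b)" .
  qed
qed

lemma dim_g2: "dim g2 = 14"
proof -
  have "independent (range g2b)"
    by (rule pairwise_orthogonal_independent[OF g2b_pairwise_orthogonal g2b_nonzero])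
  then have "dim g2 = card (range g2b)"
    unfolding g2_eq_span by (rule dim_span_eq_card_independent)
  also have "\<dots> = CARD(g2_index)"
    by (rule card_image[OF inj_g2b])
  finally show ?thesis
    by (simp add: UNIV_g2_index)
qed

section \<open>The Killing form\<close>

lemma killing_g2b:
  "killing X Y = (\<Sum>k\<in>UNIV. inner (g2b k) (lbr X (lbr Y (g2b k))) / inner (g2b k) (g2b k))"
proof -
  have "linear (\<lambda>Z. lbr X (lbr Y Z))"
    using linear_compose[OF linear_lbr(1) linear_lbr(1)] by (simp add: o_def)
  then have "killing X Y = (\<Sum>C\<in>range g2b. inner C (lbr X (lbr Y C)) / inner C C)"
    unfolding killing_def
    by (intro trace_on_orthogonal_basis g2b_pairwise_orthogonal g2b_nonzero)
      (simp_all add: g2_eq_span)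
  then show ?thesis
    by (simp add: sum.reindex[OF inj_g2b])
qed

lemma kip_g2vec: "kip (g2vec c) (g2vec d) = 4 * inner (g2vec c) (g2vec d)"
  unfolding kip_def killing_g2b sum_g2_index
  by (simp add: g2b.simps g2vec_skew7 lbr_skew7 inner_skew7 field_simps)

section \<open>Root spaces\<close>

fun g2root :: "g2_index \<Rightarrow> real \<Rightarrow> real \<Rightarrow> real \<Rightarrow> real" where
  "g2root Ga1 e1 e2 e3 = e1 - e3"
| "g2root Ga2 e1 e2 e3 = e1 - e3"
| "g2root Ga3 e1 e2 e3 = e2 - e3"
| "g2root Ga4 e1 e2 e3 = e2 - e3"
| "g2root Gb1 e1 e2 e3 = e1 - e2"
| "g2root Gb2 e1 e2 e3 = e1 - e2"
| "g2root Gc1 e1 e2 e3 = e1 - 2 * e2 + e3"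
| "g2root Gc2 e1 e2 e3 = e1 - 2 * e2 + e3"
| "g2root Gc3 e1 e2 e3 = 2 * e1 - e2 - e3"
| "g2root Gc4 e1 e2 e3 = 2 * e1 - e2 - e3"
| "g2root Gh1 e1 e2 e3 = e1 + e2 - 2 * e3"
| "g2root Gh2 e1 e2 e3 = e1 + e2 - 2 * e3"
| "g2root Gt1 e1 e2 e3 = 0"
| "g2root Gt2 e1 e2 e3 = 0"

lemma tor_skew7:
  "tor e1 e2 e3 = skew7 0 0 0 0 0 0 (e3 - e2) 0 0 0 0 0 0 0 0 (e1 - e3) 0 0 0 0 (e2 - e1)"
  unfolding tor_def rotgen_def mat7_eq_iff all_i7 by simp

lemma ad_tor_squared_g2b:
  "lbr (tor e1 e2 e3) (lbr (tor e1 e2 e3) (g2b k)) = - (g2root k e1 e2 e3)\<^sup>2 *\<^sub>R g2b k"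
  by (cases k) (simp_all add: g2b.simps tor_skew7 lbr_skew7 skew7_scaleR skew7_eq_iff
      power2_eq_square algebra_simps)

lemma ad_tor_squared_g2vec:
  "lbr (tor e1 e2 e3) (lbr (tor e1 e2 e3) (g2vec c)) = g2vec (\<lambda>k. - (g2root k e1 e2 e3)\<^sup>2 * c k)"
proof -
  have lin: "linear (\<lambda>X. lbr (tor e1 e2 e3) (lbr (tor e1 e2 e3) X))"
    using linear_compose[OF linear_lbr(1) linear_lbr(1)] by (simp add: o_def)
  show ?thesis
    by (simp add: g2vec_def linear_sum[OF lin] linear_scale[OF lin] ad_tor_squared_g2b
        mult.commute)
qed

lemma subspace_rootsp: "subspace (rootsp a1 a2 a3)"
proof -
  have "linear (\<lambda>X. lbr (tor e1 e2 e3) (lbr (tor e1 e2 e3) X) +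
      (a1 * e1 + a2 * e2 + a3 * e3)\<^sup>2 *\<^sub>R X)" for e1 e2 e3
    using linear_compose[OF linear_lbr(1) linear_lbr(1)]
    by (intro linear_compose_add linear_compose_scale_right linear_ident) (simp_all add: o_def)
  then have "subspace {X. lbr (tor e1 e2 e3) (lbr (tor e1 e2 e3) X) +
      (a1 * e1 + a2 * e2 + a3 * e3)\<^sup>2 *\<^sub>R X = 0}" for e1 e2 e3
    by (rule linear_subspace_kernel)
  then have "subspace (g2 \<inter> (\<Inter>(e1, e2, e3) \<in> {(e1, e2, e3). e1 + e2 + e3 = 0}.
      {X. lbr (tor e1 e2 e3) (lbr (tor e1 e2 e3) X) + (a1 * e1 + a2 * e2 + a3 * e3)\<^sup>2 *\<^sub>R X = 0}))"
    by (auto intro!: subspace_inter subspace_Inter subspace_g2)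
  also have "\<dots> = rootsp a1 a2 a3"
    by (auto simp: rootsp_def eq_neg_iff_add_eq_0)
  finally show ?thesis .
qed

text \<open>\<open>tor 1 2 (-3)\<close> is regular: its squared root values \<open>16, 25, 1, 36, 9, 81, 0\<close> are distinct,
  so this single torus element already cuts out each root space.\<close>
lemma rootsp_eq_span:
  assumes sep: "\<And>k. k \<in> S \<longleftrightarrow> (g2root k 1 2 (-3))\<^sup>2 = (a1 + 2 * a2 - 3 * a3)\<^sup>2"
    and eigen: "\<And>k e1 e2 e3. k \<in> S \<Longrightarrow> (g2root k e1 e2 e3)\<^sup>2 = (a1 * e1 + a2 * e2 + a3 * e3)\<^sup>2"
  shows "rootsp a1 a2 a3 = span (g2b ` S)"
proof
  show "span (g2b ` S) \<subseteq> rootsp a1 a2 a3"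
    by (intro span_minimal subspace_rootsp)
      (auto simp: rootsp_def g2b_in_g2 ad_tor_squared_g2b eigen)
  show "rootsp a1 a2 a3 \<subseteq> span (g2b ` S)"
  proof
    fix X assume X: "X \<in> rootsp a1 a2 a3"
    define c where "c k = g2coord k X" for k
    have X_eq: "X = g2vec c"
      unfolding c_def using X by (intro g2_expansion) (simp add: rootsp_def)
    have "lbr (tor 1 2 (-3)) (lbr (tor 1 2 (-3)) X) = - ((a1 + 2 * a2 - 3 * a3)\<^sup>2) *\<^sub>R X"
      using X unfolding rootsp_def by (auto simp: algebra_simps)
    then have "g2vec (\<lambda>k. - (g2root k 1 2 (-3))\<^sup>2 * c k) = - ((a1 + 2 * a2 - 3 * a3)\<^sup>2) *\<^sub>R g2vec c"
      by (simp add: X_eq ad_tor_squared_g2vec)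
    from arg_cong[OF this, of "g2coord k" for k]
    have "(g2root k 1 2 (-3))\<^sup>2 * c k = (a1 + 2 * a2 - 3 * a3)\<^sup>2 * c k" for k
      by (simp add: g2coord_g2vec linear_neg[OF linear_g2coord] linear_scale[OF linear_g2coord])
    then have "c k = 0" if "k \<notin> S" for k
      using sep[of k] that by auto
    then have "X = (\<Sum>k\<in>UNIV. if k \<in> S then c k *\<^sub>R g2b k else 0)"
      unfolding X_eq g2vec_def by (intro sum.cong) auto
    also have "\<dots> \<in> span (g2b ` S)"
      by (intro span_sum) (auto intro: span_scale span_base span_zero)
    finally show "X \<in> span (g2b ` S)" .
  qed
qed

lemma rootsp_eq_spans:
  "rootsp 1 0 (-1) = span (g2b ` {Ga1, Ga2})"
  "rootsp 0 1 (-1) = span (g2b ` {Ga3, Ga4})"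
  "rootsp 1 (-1) 0 = span (g2b ` {Gb1, Gb2})"
  "rootsp 1 (-2) 1 = span (g2b ` {Gc1, Gc2})"
  "rootsp 2 (-1) (-1) = span (g2b ` {Gc3, Gc4})"
  "rootsp 1 1 (-2) = span (g2b ` {Gh1, Gh2})"
  by (rule rootsp_eq_span; case_tac k; simp)+

lemma tset_eq_span: "tset = span (g2b ` {Gt1, Gt2})"
proof -
  have "tset = {a *\<^sub>R g2b Gt1 + b *\<^sub>R g2b Gt2 | a b. True}"
  proof (intro set_eqI iffI)
    fix T assume "T \<in> tset"
    then obtain e1 e2 e3 where "T = tor e1 e2 e3" unfolding tset_def by blast
    then have "T = ((e1 + e2 - 2 * e3) / 2) *\<^sub>R g2b Gt1 + ((e2 - e1) / 2) *\<^sub>R g2b Gt2"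
      by (simp add: g2b.simps tor_skew7 skew7_scaleR skew7_add skew7_eq_iff field_simps)
    then show "T \<in> {a *\<^sub>R g2b Gt1 + b *\<^sub>R g2b Gt2 | a b. True}" by blast
  next
    fix T assume "T \<in> {a *\<^sub>R g2b Gt1 + b *\<^sub>R g2b Gt2 | a b. True}"
    then obtain a b where T: "T = a *\<^sub>R g2b Gt1 + b *\<^sub>R g2b Gt2" by blast
    define e1 where "e1 = (a - 3 * b) / 3"
    have "T = tor e1 (e1 + 2 * b) (e1 - a + b)"
      unfolding T by (simp add: g2b.simps tor_skew7 skew7_scaleR skew7_add skew7_eq_iff)
    moreover have "e1 + (e1 + 2 * b) + (e1 - a + b) = 0" by (simp add: e1_def field_simps)
    ultimately show "T \<in> tset" unfolding tset_def by blast
  qed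
  also have "\<dots> = span (g2b ` ({Gt1} \<union> {Gt2}))"
    unfolding span_image_Un by (auto simp: span_singleton)
  finally show ?thesis by (simp add: insert_commute)
qed

definition h_index :: "g2_index set" where
  "h_index = {Gt1, Gt2, Gh1, Gh2}"

definition p_index :: "g2_index set" where
  "p_index = {Ga1, Ga2, Ga3, Ga4, Gb1, Gb2, Gc1, Gc2, Gc3, Gc4}"

lemma hlie_eq_span: "hlie = span (g2b ` h_index)"
  unfolding hlie_def tset_eq_span rootsp_eq_spans h_index_def span_image_Un[symmetric]
  by (simp add: insert_commute)

lemma p_eq_spans:
  "p1 = span (g2b ` {Ga1, Ga2, Ga3, Ga4})"
  "p2 = span (g2b ` {Gb1, Gb2})"
  "p3 = span (g2b ` {Gc1, Gc2, Gc3, Gc4})"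
  unfolding p1_def p2_def p3_def rootsp_eq_spans span_image_Un[symmetric]
  by (simp_all add: insert_commute)

lemma pspace_eq_span: "pspace = span (g2b ` p_index)"
proof -
  have "pspace = {X + Y | X Y. X \<in> span (g2b ` ({Ga1, Ga2, Ga3, Ga4} \<union> {Gb1, Gb2})) \<and>
      Y \<in> span (g2b ` {Gc1, Gc2, Gc3, Gc4})}"
    unfolding pspace_def p_eq_spans span_image_Un by blast
  then show ?thesis
    unfolding span_image_Un[symmetric] p_index_def by (simp add: insert_commute)
qed

section \<open>The metric \<open>g_r\<close> and the Laplacian\<close>

definition block_radius :: "real \<Rightarrow> real \<Rightarrow> real \<Rightarrow> g2_index \<Rightarrow> real" where
  "block_radius r1 r2 r3 k =
     (if k \<in> {Ga1, Ga2, Ga3, Ga4} then r1 else if k \<in> {Gb1, Gb2} then r2 else r3)"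

definition gr_weight :: "real \<Rightarrow> real \<Rightarrow> real \<Rightarrow> g2_index \<Rightarrow> real" where
  "gr_weight r1 r2 r3 k = 4 * inner (g2b k) (g2b k) / (block_radius r1 r2 r3 k)\<^sup>2"

definition gr_form :: "real \<Rightarrow> real \<Rightarrow> real \<Rightarrow> mat7 \<Rightarrow> mat7 \<Rightarrow> real" where
  "gr_form r1 r2 r3 X Y = (\<Sum>k\<in>p_index. gr_weight r1 r2 r3 k * g2coord k X * g2coord k Y)"

lemma gr_sum_eq_gr_form:
  assumes "r1 \<noteq> 0" "r2 \<noteq> 0" "r3 \<noteq> 0"
    and "X1 \<in> p1" "X2 \<in> p2" "X3 \<in> p3" "Y1 \<in> p1" "Y2 \<in> p2" "Y3 \<in> p3"
  shows "kip X1 Y1 / r1\<^sup>2 + kip X2 Y2 / r2\<^sup>2 + kip X3 Y3 / r3\<^sup>2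
       = gr_form r1 r2 r3 (X1 + X2 + X3) (Y1 + Y2 + Y3)"
proof -
  obtain a1 a2 a3 b1 b2 b3 where
    X: "X1 = g2vec a1" "X2 = g2vec a2" "X3 = g2vec a3"
    and Y: "Y1 = g2vec b1" "Y2 = g2vec b2" "Y3 = g2vec b3"
    and supp: "\<And>k. k \<notin> {Ga1, Ga2, Ga3, Ga4} \<Longrightarrow> a1 k = 0 \<and> b1 k = 0"
      "\<And>k. k \<notin> {Gb1, Gb2} \<Longrightarrow> a2 k = 0 \<and> b2 k = 0"
      "\<And>k. k \<notin> {Gc1, Gc2, Gc3, Gc4} \<Longrightarrow> a3 k = 0 \<and> b3 k = 0"
    using assms(4-9) unfolding p_eq_spans span_g2b_iff by metis
  have "g2vec a + g2vec b + g2vec c = g2vec (\<lambda>k. a k + b k + c k)" for a b c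
    by (simp add: g2vec_def scaleR_add_left sum.distrib)
  then show ?thesis
    using assms(1-3) supp
    by (simp add: X Y kip_g2vec inner_g2vec gr_form_def g2coord_g2vec sum_g2_index p_index_def
        gr_weight_def block_radius_def field_simps)
qed

lemma gr_eq_gr_form:
  assumes "r1 \<noteq> 0" "r2 \<noteq> 0" "r3 \<noteq> 0" and "X \<in> pspace" "Y \<in> pspace"
  shows "gr r1 r2 r3 X Y = gr_form r1 r2 r3 X Y"
  unfolding gr_def
proof (rule the_equality)
  obtain X1 X2 X3 Y1 Y2 Y3 where "X1 \<in> p1" "X2 \<in> p2" "X3 \<in> p3" "X = X1 + X2 + X3"
    and "Y1 \<in> p1" "Y2 \<in> p2" "Y3 \<in> p3" "Y = Y1 + Y2 + Y3"
    using \<open>X \<in> pspace\<close> \<open>Y \<in> pspace\<close> unfolding pspace_def by blast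
  then show "\<exists>X1 X2 X3 Y1 Y2 Y3. X1 \<in> p1 \<and> X2 \<in> p2 \<and> X3 \<in> p3 \<and> Y1 \<in> p1 \<and> Y2 \<in> p2 \<and> Y3 \<in> p3 \<and>
      X = X1 + X2 + X3 \<and> Y = Y1 + Y2 + Y3 \<and>
      gr_form r1 r2 r3 X Y = kip X1 Y1 / r1\<^sup>2 + kip X2 Y2 / r2\<^sup>2 + kip X3 Y3 / r3\<^sup>2"
    using gr_sum_eq_gr_form[OF assms(1-3)] by metis
qed (use gr_sum_eq_gr_form[OF assms(1-3)] in blast)

lemma bilinear_gr_form: "bilinear (gr_form r1 r2 r3)"
  unfolding bilinear_def gr_form_def
  by (auto intro!: linearI simp: linear_add[OF linear_g2coord] linear_scale[OF linear_g2coord]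
      sum.distrib sum_distrib_left algebra_simps)

lemma gr_form_g2b:
  "k \<in> p_index \<Longrightarrow> gr_form r1 r2 r3 (g2b k) (g2b l) = (if k = l then gr_weight r1 r2 r3 k else 0)"
proof -
  assume "k \<in> p_index"
  have "gr_form r1 r2 r3 (g2b k) (g2b l) =
      (\<Sum>m\<in>p_index. if m = k then (if k = l then gr_weight r1 r2 r3 k else 0) else 0)"
    unfolding gr_form_def by (intro sum.cong) (auto simp: g2coord_g2b)
  with \<open>k \<in> p_index\<close> show ?thesis by (simp add: p_index_def)
qed

lemma gr_weight_pos: "r1 \<noteq> 0 \<Longrightarrow> r2 \<noteq> 0 \<Longrightarrow> r3 \<noteq> 0 \<Longrightarrow> gr_weight r1 r2 r3 k > 0"
  using g2b_sqnorm_pos[of k] by (simp add: gr_weight_def block_radius_def)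

lemma gr_onb_iff:
  assumes "r1 \<noteq> 0" "r2 \<noteq> 0" "r3 \<noteq> 0"
  shows "gr_onb r1 r2 r3 B \<longleftrightarrow> finite B \<and> span B = span (g2b ` p_index) \<and>
    (\<forall>b\<in>B. \<forall>b'\<in>B. gr_form r1 r2 r3 b b' = (if b = b' then 1 else 0))"
proof -
  have "span B = span (g2b ` p_index) \<Longrightarrow> B \<subseteq> pspace"
    using span_superset[of B] by (simp add: pspace_eq_span)
  then show ?thesis
    unfolding gr_onb_def using gr_eq_gr_form[OF assms]
    by (auto simp: pspace_eq_span span_span subset_iff)
qed

lemma gr_orthogonal_g2b:
  assumes "r1 \<noteq> 0" "r2 \<noteq> 0" "r3 \<noteq> 0"
  shows "\<And>c c'. c \<in> g2b ` p_index \<Longrightarrow> c' \<in> g2b ` p_index \<Longrightarrow> c \<noteq> c' \<Longrightarrow>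
      gr_form r1 r2 r3 c c' = 0"
    and "\<And>c. c \<in> g2b ` p_index \<Longrightarrow> gr_form r1 r2 r3 c c > 0"
  using gr_form_g2b gr_weight_pos[OF assms] by auto

lemma gr_onb_exists:
  assumes "r1 \<noteq> 0" "r2 \<noteq> 0" "r3 \<noteq> 0"
  shows "\<exists>B. gr_onb r1 r2 r3 B"
proof -
  have "finite (g2b ` p_index)" by (simp add: p_index_def)
  then obtain B where "finite B" "span B = span (g2b ` p_index)"
    "\<And>b b'. b \<in> B \<Longrightarrow> b' \<in> B \<Longrightarrow> gr_form r1 r2 r3 b b' = (if b = b' then 1 else 0)"
    by (rule orthonormal_rescaling[OF bilinear_gr_form _ gr_orthogonal_g2b[OF assms]]) auto
  then show ?thesis
    by (auto simp: gr_onb_iff[OF assms])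
qed

lemma lap_op_eq_weighted_sum:
  fixes \<pi> :: "mat7 \<Rightarrow> 'v \<Rightarrow> 'v::real_vector"
  assumes r: "r1 \<noteq> 0" "r2 \<noteq> 0" "r3 \<noteq> 0" and "bilinear \<pi>"
  shows "lap_op r1 r2 r3 \<pi> v =
    - (\<Sum>k\<in>p_index. (1 / gr_weight r1 r2 r3 k) *\<^sub>R \<pi> (g2b k) (\<pi> (g2b k) v))"
proof -
  define B where "B = (SOME B. gr_onb r1 r2 r3 B)"
  have "gr_onb r1 r2 r3 B"
    unfolding B_def using gr_onb_exists[OF r] by (rule someI_ex)
  then have B: "finite B" "span B = span (g2b ` p_index)"
    "\<And>b b'. b \<in> B \<Longrightarrow> b' \<in> B \<Longrightarrow> gr_form r1 r2 r3 b b' = (if b = b' then 1 else 0)"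
    unfolding gr_onb_iff[OF r] by blast+
  have Q: "bilinear (\<lambda>X Y. \<pi> X (\<pi> Y v))"
    using \<open>bilinear \<pi>\<close> by (auto simp: bilinear_def linear_iff)
  have sym: "gr_form r1 r2 r3 X Y = gr_form r1 r2 r3 Y X" for X Y
    by (simp add: gr_form_def mult_ac)
  have fin: "finite (g2b ` p_index)"
    by (simp add: p_index_def)
  have nz: "gr_form r1 r2 r3 c c \<noteq> 0" if "c \<in> g2b ` p_index" for c
    using gr_orthogonal_g2b(2)[OF r that] by simp
  have "(\<Sum>X\<in>B. \<pi> X (\<pi> X v)) =
      (\<Sum>c\<in>g2b ` p_index. (1 / gr_form r1 r2 r3 c c) *\<^sub>R \<pi> c (\<pi> c v))"
    by (rule orthonormal_diagonal_sum[OF bilinear_gr_form sym Q B(1,3) fin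
          gr_orthogonal_g2b(1)[OF r] nz B(2)])
  also have "\<dots> = (\<Sum>k\<in>p_index. (1 / gr_weight r1 r2 r3 k) *\<^sub>R \<pi> (g2b k) (\<pi> (g2b k) v))"
    by (simp add: sum.reindex[OF inj_on_subset[OF inj_g2b]] gr_form_g2b)
  finally show ?thesis
    by (simp add: lap_op_def B_def)
qed

section \<open>\<open>H\<close>-fixed vectors and eigenvalues\<close>

lemma fixH_eq:
  assumes "\<And>v. linear (\<lambda>X. \<pi> X v)"
  shows "fixH \<pi> V = {v \<in> V. \<forall>k\<in>h_index. \<pi> (g2b k) v = 0}"
proof -
  have "(\<forall>X\<in>span (g2b ` h_index). \<pi> X v = 0) \<longleftrightarrow> (\<forall>k\<in>h_index. \<pi> (g2b k) v = 0)" for v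
  proof
    assume "\<forall>k\<in>h_index. \<pi> (g2b k) v = 0"
    then have "span (g2b ` h_index) \<subseteq> {X. \<pi> X v = 0}"
      by (intro span_minimal linear_subspace_kernel assms) auto
    then show "\<forall>X\<in>span (g2b ` h_index). \<pi> X v = 0" by blast
  qed (auto intro: span_base)
  then show ?thesis
    by (simp add: fixH_def hlie_eq_span)
qed

lemma bilinear_pi_std: "bilinear pi_std"
  unfolding bilinear_def pi_std_def
  by (auto intro!: linearI
      simp: matrix_vector_mult_add_rdistrib scaleR_matrix_vector_assoc)

lemma bilinear_pi_ad: "bilinear pi_ad"
  unfolding bilinear_def pi_ad_def using linear_lbr by blast

lemma fixH_pi_std: "fixH pi_std UNIV = span {axis I0 1}"
proof -
  have lin: "linear (\<lambda>X. pi_std X v)" for v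
    using bilinear_pi_std by (simp add: bilinear_def)
  have "v \<in> fixH pi_std UNIV \<longleftrightarrow>
      v $ I1 = 0 \<and> v $ I2 = 0 \<and> v $ I3 = 0 \<and> v $ I4 = 0 \<and> v $ I5 = 0 \<and> v $ I6 = 0" for v
    unfolding fixH_eq[OF lin] by (simp add: h_index_def pi_std_def g2b.simps vec_eq_iff all_i7) blast
  moreover have "(v $ I1 = 0 \<and> v $ I2 = 0 \<and> v $ I3 = 0 \<and> v $ I4 = 0 \<and> v $ I5 = 0 \<and> v $ I6 = 0)
      \<longleftrightarrow> v = (v $ I0) *\<^sub>R axis I0 1" for v :: vec7
    by (simp add: vec_eq_iff all_i7 axis_def)
  moreover have "(k *\<^sub>R axis I0 1 :: vec7) $ i = 0" if "i \<noteq> I0" for k i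
    using that by (simp add: axis_def)
  ultimately show ?thesis
    unfolding span_singleton by (auto intro: rangeI)
qed

lemma fixH_pi_ad: "fixH pi_ad g2 = span {g2b Gt2}"
proof -
  have lin: "linear (\<lambda>X. pi_ad X Y)" for Y
    using bilinear_pi_ad by (simp add: bilinear_def)
  have "Y \<in> span {g2b Gt2}" if "Y \<in> g2" "\<forall>k\<in>h_index. lbr (g2b k) Y = 0" for Y
  proof -
    define c where "c k = g2coord k Y" for k
    have Y: "Y = g2vec c"
      unfolding c_def using \<open>Y \<in> g2\<close> by (rule g2_expansion)
    have "\<forall>k. k \<noteq> Gt2 \<longrightarrow> c k = 0"
      using that(2) unfolding Y
      by (simp add: h_index_def g2b.simps g2vec_skew7 lbr_skew7 skew7_zero skew7_eq_iff all_g2_index)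
    then have "Y = c Gt2 *\<^sub>R g2b Gt2"
      unfolding Y g2vec_def by (subst sum.remove[of _ Gt2]) auto
    then show ?thesis
      by (auto simp: span_singleton)
  qed
  moreover have "lbr (g2b k) (g2b Gt2) = 0" if "k \<in> h_index" for k
    using that by (auto simp: h_index_def g2b.simps lbr_skew7 skew7_zero)
  then have "Y \<in> g2 \<and> (\<forall>k\<in>h_index. lbr (g2b k) Y = 0)" if "Y \<in> span {g2b Gt2}" for Y
    using that g2b_in_g2 subspace_g2 linear_scale[OF linear_lbr(1)]
    by (auto simp: span_singleton subspace_scale)
  ultimately show ?thesis
    unfolding fixH_eq[OF lin] pi_ad_def by blast
qed

lemma lap_op_pi_std:
  assumes r: "r1 \<noteq> 0" "r2 \<noteq> 0" "r3 \<noteq> 0" and "v \<in> fixH pi_std UNIV"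
  shows "lap_op r1 r2 r3 pi_std v = (r1\<^sup>2 / 3 + r2\<^sup>2 / 6) *\<^sub>R v"
proof -
  obtain t where v: "v = t *\<^sub>R axis I0 1"
    using \<open>v \<in> fixH pi_std UNIV\<close> by (auto simp: fixH_pi_std span_singleton)
  show ?thesis
    using r
    by (simp add: lap_op_eq_weighted_sum[OF r bilinear_pi_std] v p_index_def gr_weight_def
        block_radius_def g2b.simps inner_skew7 pi_std_def vec_eq_iff all_i7 axis_def field_simps)
qed

lemma lap_op_pi_ad:
  assumes r: "r1 \<noteq> 0" "r2 \<noteq> 0" "r3 \<noteq> 0" and "Y \<in> fixH pi_ad g2"
  shows "lap_op r1 r2 r3 pi_ad Y = (r1\<^sup>2 / 12 + r2\<^sup>2 / 6 + 3 * r3\<^sup>2 / 4) *\<^sub>R Y"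
proof -
  obtain s where Y: "Y = s *\<^sub>R g2b Gt2"
    using \<open>Y \<in> fixH pi_ad g2\<close> by (auto simp: fixH_pi_ad span_singleton)
  show ?thesis
    using r
    by (simp add: lap_op_eq_weighted_sum[OF r bilinear_pi_ad] Y p_index_def gr_weight_def
        block_radius_def g2b.simps inner_skew7 pi_ad_def lbr_skew7 skew7_scaleR skew7_add
        skew7_uminus skew7_eq_iff field_simps)
qed

theorem mainTheorem2:
  fixes r1 r2 r3 :: real
  assumes "r1 > 0" and "r2 > 0" and "r3 > 0"
  shows "dim (UNIV :: vec7 set) = 7 \<and> dim g2 = 14
    \<and> dim (fixH pi_std UNIV) = 1 \<and> dim (fixH pi_ad g2) = 1
    \<and> (\<forall>v \<in> fixH pi_std UNIV. lap_op r1 r2 r3 pi_std v = (r1^2 / 3 + r2^2 / 6) *\<^sub>R v)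
    \<and> (\<forall>Y \<in> fixH pi_ad g2.
         lap_op r1 r2 r3 pi_ad Y = (r1^2 / 12 + r2^2 / 6 + 3 * r3^2 / 4) *\<^sub>R Y)"
proof -
  have r: "r1 \<noteq> 0" "r2 \<noteq> 0" "r3 \<noteq> 0" using assms by auto
  have "dim (UNIV :: vec7 set) = 7" by (simp add: UNIV_i7)
  moreover have "dim (fixH pi_std UNIV) = 1" by (simp add: fixH_pi_std)
  moreover have "dim (fixH pi_ad g2) = 1" using g2b_nonzero by (auto simp: fixH_pi_ad)
  ultimately show ?thesis
    using dim_g2 lap_op_pi_std[OF r] lap_op_pi_ad[OF r] by blast
qed

end
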